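(* Let $(\mathbf{k},\phi)$ be a difference field of characteristic zero such that $\mathbf{k}$ is a real field and its field of constants $C:=\mathbf{k}^{\phi}$ is real closed. Let $A\in \mathrm{GL}_n(\mathbf{k})$ and let $(R,\phi)$ be a Picard-Vessiot extension for $\phi Y=AY$ over $(\mathbf{k},\phi)$. Assume that $R\neq R[i]$, i.e. there is no $x\in R$ with $x^2+1=0$. Then $(R[i],\phi)$ is a Picard-Vessiot extension for $\phi Y=AY$ over $(\mathbf{k}[i],\phi)$.
   Context: A difference ring $(R,\phi)$ is a ring $R$ with a ring automorphism $\phi$; a difference ideal is an ideal stable under $\phi$; $(R,\phi)$ is simple if its only difference ideals are $(0)$ and $R$. A difference ring extension of $(\mathbf{k},\phi)$ is a ring extension with an automorphism restricting to $\phi$ on $\mathbf{k}$. A field is real if $0$ is not a sum of squares of nonzero elements; it is real closed if it has no proper real algebraic extension. A Picard-Vessiot extension for $\phi Y=AY$ over $(\mathbf{k},\phi)$ is a difference ring extension $(R,\phi)$ of $(\mathbf{k},\phi)$ such that (1) there exists $U\in\mathrm{GL}_n(R)$ with $\phi(U)=AU$; (2) $R$ is generated as a $\mathbf{k}$-algebra by the entries of $U$ and $\det(U)^{-1}$; (3) $(R,\phi)$ is a simple difference ring. For a difference ring $R$ with no element $x$ satisfying $x^2+1=0$, $R[i]:=R[X]/(X^2+1)$, with $\phi$ extended by $\phi(i)=i$; if $R$ contains such an $x$, the convention is $R[i]=R$. In particular $\mathbf{k}[i]$ is defined this way. *)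

theory Defs
  imports "Jordan_Normal_Form.Determinant" "HOL-Algebra.Ring"
begin

definition ring_automorphism :: "('a::comm_ring_1 \<Rightarrow> 'a) \<Rightarrow> bool" where
  "ring_automorphism f \<longleftrightarrow> bij f \<and> f 1 = 1 \<and>
     (\<forall>x y. f (x + y) = f x + f y) \<and> (\<forall>x y. f (x * y) = f x * f y)"

definition ring_embedding :: "('a::comm_ring_1 \<Rightarrow> 'b::comm_ring_1) \<Rightarrow> bool" where
  "ring_embedding f \<longleftrightarrow> inj f \<and> f 1 = 1 \<and>
     (\<forall>x y. f (x + y) = f x + f y) \<and> (\<forall>x y. f (x * y) = f x * f y)"

definition is_ideal :: "'a::comm_ring_1 set \<Rightarrow> bool" where
  "is_ideal I \<longleftrightarrow> 0 \<in> I \<and> (\<forall>x\<in>I. \<forall>y\<in>I. x + y \<in> I) \<and> (\<forall>r. \<forall>x\<in>I. r * x \<in> I)"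

definition difference_ideal :: "('a::comm_ring_1 \<Rightarrow> 'a) \<Rightarrow> 'a set \<Rightarrow> bool" where
  "difference_ideal \<sigma> I \<longleftrightarrow> is_ideal I \<and> \<sigma> ` I \<subseteq> I"

definition simple_difference_ring :: "('a::comm_ring_1 \<Rightarrow> 'a) \<Rightarrow> bool" where
  "simple_difference_ring \<sigma> \<longleftrightarrow> (\<forall>I. difference_ideal \<sigma> I \<longrightarrow> I = {0} \<or> I = UNIV)"

definition difference_ring_ext ::
  "('b::comm_ring_1 \<Rightarrow> 'b) \<Rightarrow> ('r::comm_ring_1 \<Rightarrow> 'r) \<Rightarrow> ('b \<Rightarrow> 'r) \<Rightarrow> bool" where
  "difference_ring_ext \<phi> \<sigma> \<iota> \<longleftrightarrow> ring_automorphism \<phi> \<and> ring_automorphism \<sigma> \<and>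
     ring_embedding \<iota> \<and> (\<forall>x. \<sigma> (\<iota> x) = \<iota> (\<phi> x))"

definition is_subring :: "'a::comm_ring_1 set \<Rightarrow> bool" where
  "is_subring T \<longleftrightarrow> 0 \<in> T \<and> 1 \<in> T \<and> (\<forall>x\<in>T. - x \<in> T) \<and>
     (\<forall>x\<in>T. \<forall>y\<in>T. x + y \<in> T) \<and> (\<forall>x\<in>T. \<forall>y\<in>T. x * y \<in> T)"

definition subring_gen :: "'a::comm_ring_1 set \<Rightarrow> 'a set" where
  "subring_gen S = \<Inter>{T. is_subring T \<and> S \<subseteq> T}"

definition GL_mat :: "nat \<Rightarrow> 'a::comm_ring_1 mat \<Rightarrow> bool" where
  "GL_mat n M \<longleftrightarrow> M \<in> carrier_mat n n \<and> (\<exists>d. d * det M = 1)"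

text \<open>The \<open>k\<close>-algebra generated by a set \<open>S\<close> is the subring generated by \<open>\<iota>(k) \<union> S\<close>.\<close>
definition picard_vessiot ::
  "('b::comm_ring_1 \<Rightarrow> 'b) \<Rightarrow> ('r::comm_ring_1 \<Rightarrow> 'r) \<Rightarrow> ('b \<Rightarrow> 'r) \<Rightarrow> nat \<Rightarrow> 'b mat \<Rightarrow> bool" where
  "picard_vessiot \<phi> \<sigma> \<iota> n A \<longleftrightarrow> difference_ring_ext \<phi> \<sigma> \<iota> \<and> A \<in> carrier_mat n n \<and>
     (\<exists>U d. GL_mat n U \<and> map_mat \<sigma> U = map_mat \<iota> A * U \<and> d * det U = 1 \<and>
        subring_gen (range \<iota> \<union> {U $$ (i, j) | i j. i < n \<and> j < n} \<union> {d}) = UNIV) \<and>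
     simple_difference_ring \<sigma>"

definition is_real :: "'a::comm_ring_1 set \<Rightarrow> bool" where
  "is_real S \<longleftrightarrow> (\<forall>xs. xs \<noteq> [] \<and> set xs \<subseteq> S - {0} \<longrightarrow> sum_list (map (\<lambda>x. x * x) xs) \<noteq> 0)"

definition real_ring_alg :: "('a, 'm) ring_scheme \<Rightarrow> bool" where
  "real_ring_alg L \<longleftrightarrow> (\<forall>xs. xs \<noteq> [] \<and> set xs \<subseteq> carrier L - {\<zero>\<^bsub>L\<^esub>} \<longrightarrow>
      (\<Oplus>\<^bsub>L\<^esub> i\<in>{..<length xs}. xs ! i \<otimes>\<^bsub>L\<^esub> xs ! i) \<noteq> \<zero>\<^bsub>L\<^esub>)"

text \<open>Extensions are field structures \<open>L\<close> together with an injective ring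
  homomorphism \<open>h : C \<rightarrow> L\<close>; every algebraic extension of \<open>C\<close> is isomorphic to one whose
  carrier lies in the type \<open>'k list \<times> nat\<close> (cardinality bound), so quantifying over
  such \<open>L\<close> covers all algebraic extensions up to isomorphism.\<close>
definition real_closed :: "'k::field set \<Rightarrow> bool" where
  "real_closed C \<longleftrightarrow> is_real C \<and>
     (\<forall>(L :: ('k list \<times> nat) ring) h.
        field L \<and> h ` C \<subseteq> carrier L \<and> inj_on h C \<and> h 1 = \<one>\<^bsub>L\<^esub> \<and>
        (\<forall>x\<in>C. \<forall>y\<in>C. h (x + y) = h x \<oplus>\<^bsub>L\<^esub> h y \<and> h (x * y) = h x \<otimes>\<^bsub>L\<^esub> h y) \<and>
        (\<forall>z\<in>carrier L. \<exists>cs. set cs \<subseteq> C \<and> (\<exists>c\<in>set cs. c \<noteq> 0) \<and>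
            (\<Oplus>\<^bsub>L\<^esub> i\<in>{..<length cs}. h (cs ! i) \<otimes>\<^bsub>L\<^esub> z [^]\<^bsub>L\<^esub> i) = \<zero>\<^bsub>L\<^esub>) \<and>
        real_ring_alg L
        \<longrightarrow> h ` C = carrier L)"

section \<open>Adjoining i: \<open>R[i] = R[X]/(X^2+1)\<close>, represented by pairs \<open>a + b i\<close>\<close>

datatype 'a gi = GI (re: 'a) (im: 'a)

instantiation gi :: (comm_ring_1) comm_ring_1
begin
definition "0 = GI 0 0"
definition "1 = GI 1 0"
definition "x + y = GI (re x + re y) (im x + im y)"
definition "x - y = GI (re x - re y) (im x - im y)"
definition "- x = GI (- re x) (- im x)"
definition "x * y = GI (re x * re y - im x * im y) (re x * im y + im x * re y)"
instance
  by standard (auto simp: zero_gi_def one_gi_def plus_gi_def minus_gi_def uminus_gi_def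
      times_gi_def algebra_simps intro: gi.expand)
end

definition gi_map :: "('a \<Rightarrow> 'b) \<Rightarrow> 'a gi \<Rightarrow> 'b gi" where
  "gi_map f z = GI (f (re z)) (f (im z))"

definition gi_of :: "'a::comm_ring_1 \<Rightarrow> 'a gi" where
  "gi_of a = GI a 0"

end

theory Submission
  imports Defs
begin

text \<open>Adjoining \<open>i\<close> commutes with every step of the definition. The fundamental matrix \<open>U\<close>
  and \<open>det U\<inverse>\<close> still work over \<open>R[i]\<close>, and they generate \<open>R[i]\<close> over \<open>k[i]\<close> because \<open>i\<close> comes
  from \<open>k[i]\<close>. For simplicity, a difference ideal \<open>I\<close> of \<open>R[i]\<close> yields two difference ideals of
  \<open>R\<close>: its set of real parts and \<open>I \<inter> R\<close>. If the real parts vanish, then so do the imaginary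
  ones (multiply by \<open>i\<close>) and \<open>I = 0\<close>. Otherwise \<open>1 + b i \<in> I\<close> for some \<open>b\<close>, so its norm
  \<open>1 + b\<^sup>2\<close> lies in \<open>I \<inter> R\<close>; it is nonzero as \<open>R\<close> has no square root of \<open>-1\<close>, hence
  \<open>I \<inter> R = R\<close> and \<open>I = R[i]\<close>.\<close>

lemma gi_simps:
  "GI a b + GI c d = GI (a + c) (b + d)"
  "GI a b * GI c d = GI (a * c - b * d) (a * d + b * c)"
  "(0::'a gi) = GI 0 0"
  "(1::'a gi) = GI 1 0"
  for a b c d :: "'a::comm_ring_1"
  by (simp_all add: plus_gi_def times_gi_def zero_gi_def one_gi_def)

lemma gi_decompose: "z = gi_of (re z) + gi_of (im z) * GI 0 1"
  by (cases z) (simp add: gi_of_def gi_simps)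

interpretation gi_of: comm_ring_hom "gi_of :: 'a::comm_ring_1 \<Rightarrow> 'a gi"
  by unfold_locales (auto simp: gi_of_def gi_simps)

lemma additive_map_zero:
  fixes f :: "'a::comm_ring_1 \<Rightarrow> 'b::comm_ring_1"
  assumes "\<forall>x y. f (x + y) = f x + f y"
  shows "f 0 = 0"
  using assms by (metis add_cancel_right_right add_0)

lemma additive_map_diff:
  fixes f :: "'a::comm_ring_1 \<Rightarrow> 'b::comm_ring_1"
  assumes "\<forall>x y. f (x + y) = f x + f y"
  shows "f (a - b) = f a - f b"
  using assms by (metis diff_add_cancel eq_diff_eq)

lemma ring_automorphism_zero: "ring_automorphism f \<Longrightarrow> f 0 = 0"
  unfolding ring_automorphism_def by (blast intro: additive_map_zero)

lemma ring_embedding_zero: "ring_embedding f \<Longrightarrow> f 0 = 0"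
  unfolding ring_embedding_def by (blast intro: additive_map_zero)

lemma gi_map_gi_of: "f 0 = 0 \<Longrightarrow> gi_map f (gi_of x) = gi_of (f x)"
  by (simp add: gi_map_def gi_of_def)

lemma gi_map_hom:
  fixes f :: "'a::comm_ring_1 \<Rightarrow> 'b::comm_ring_1"
  assumes "f 1 = 1" "\<forall>x y. f (x + y) = f x + f y" "\<forall>x y. f (x * y) = f x * f y"
  shows "gi_map f 1 = 1"
    and "\<forall>x y. gi_map f (x + y) = gi_map f x + gi_map f y"
    and "\<forall>x y. gi_map f (x * y) = gi_map f x * gi_map f y"
  using assms additive_map_zero[OF assms(2)] additive_map_diff[OF assms(2)]
  by (auto simp: gi_map_def one_gi_def plus_gi_def times_gi_def)

lemma inj_gi_map: "inj f \<Longrightarrow> inj (gi_map f)"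
  by (auto simp: inj_def gi_map_def intro: gi.expand)

lemma surj_gi_map:
  assumes "surj f"
  shows "surj (gi_map f)"
proof (rule surjI)
  fix z
  show "gi_map f (GI (inv_into UNIV f (re z)) (inv_into UNIV f (im z))) = z"
    using assms by (simp add: gi_map_def surj_f_inv_f)
qed

lemma ring_automorphism_gi_map: "ring_automorphism f \<Longrightarrow> ring_automorphism (gi_map f)"
  unfolding ring_automorphism_def bij_def
  using gi_map_hom[of f] inj_gi_map surj_gi_map by metis

lemma ring_embedding_gi_map: "ring_embedding f \<Longrightarrow> ring_embedding (gi_map f)"
  unfolding ring_embedding_def using gi_map_hom[of f] inj_gi_map by metis

lemma difference_ring_ext_gi_map:
  "difference_ring_ext \<phi> \<sigma> \<iota> \<Longrightarrow> difference_ring_ext (gi_map \<phi>) (gi_map \<sigma>) (gi_map \<iota>)"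
  unfolding difference_ring_ext_def
  by (simp add: ring_automorphism_gi_map ring_embedding_gi_map gi_map_def)

lemma map_mat_gi_map_gi_of:
  "f 0 = 0 \<Longrightarrow> map_mat (gi_map f) (map_mat gi_of M) = map_mat gi_of (map_mat f M)"
  by (rule eq_matI) (simp_all add: gi_map_gi_of)

lemma (in comm_ring_hom) GL_mat_map_mat:
  assumes "GL_mat n M"
  shows "GL_mat n (map_mat hom M)"
proof -
  obtain d where M: "M \<in> carrier_mat n n" and d: "d * det M = 1"
    using assms by (auto simp: GL_mat_def)
  have "hom d * det (map_mat hom M) = 1"
    using d M by (metis hom_det hom_mult hom_one)
  with M show ?thesis by (auto simp: GL_mat_def)
qed

lemma (in comm_ring_hom) is_subring_vimage: "is_subring T \<Longrightarrow> is_subring (hom -` T)"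
  unfolding is_subring_def by (simp add: hom_add hom_mult hom_uminus)

lemma (in comm_ring_hom) difference_ideal_vimage:
  assumes "difference_ideal \<tau> I" and hom_commute: "\<And>x. \<tau> (hom x) = hom (\<sigma> x)"
  shows "difference_ideal \<sigma> (hom -` I)"
proof -
  have "is_ideal I" and "\<tau> ` I \<subseteq> I"
    using assms(1) by (auto simp: difference_ideal_def)
  then show ?thesis
    unfolding difference_ideal_def is_ideal_def
    by (auto simp: hom_add hom_mult hom_commute[symmetric])
qed

lemma subring_gen_eq_UNIV_iff:
  "subring_gen S = UNIV \<longleftrightarrow> (\<forall>T. is_subring T \<and> S \<subseteq> T \<longrightarrow> T = UNIV)"
  unfolding subring_gen_def by blast

lemma subring_gen_gi_eq_UNIV:
  assumes "subring_gen S = UNIV" and "gi_of ` S \<subseteq> S'" and "GI 0 1 \<in> S'"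
  shows "subring_gen S' = UNIV"
  unfolding subring_gen_eq_UNIV_iff
proof (intro allI impI)
  fix T assume "is_subring T \<and> S' \<subseteq> T"
  then have T: "is_subring T" "S' \<subseteq> T" by auto
  have "S \<subseteq> gi_of -` T" using assms(2) T(2) by auto
  then have "gi_of -` T = UNIV"
    using assms(1) gi_of.is_subring_vimage[OF T(1)] unfolding subring_gen_eq_UNIV_iff by blast
  moreover have "GI 0 1 \<in> T" using assms(3) T(2) by auto
  ultimately have "gi_of (re z) + gi_of (im z) * GI 0 1 \<in> T" for z
    using T(1) unfolding is_subring_def by blast
  then show "T = UNIV"
    by (metis gi_decompose UNIV_eq_I)
qed

lemma difference_ideal_re_image:
  assumes "difference_ideal (gi_map \<sigma>) I"
  shows "difference_ideal \<sigma> (re ` I)"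
  unfolding difference_ideal_def is_ideal_def
proof (intro conjI ballI allI subsetI)
  have I: "is_ideal I" and Is: "gi_map \<sigma> ` I \<subseteq> I"
    using assms by (auto simp: difference_ideal_def)
  show "0 \<in> re ` I" using I by (force simp: is_ideal_def zero_gi_def)
  show "x + y \<in> re ` I" if "x \<in> re ` I" "y \<in> re ` I" for x y
    using that I by (force simp: is_ideal_def plus_gi_def)
  show "r * x \<in> re ` I" if x: "x \<in> re ` I" for r x
  proof -
    obtain z where "z \<in> I" "x = re z" using x by blast
    moreover have "re (gi_of r * z) = r * re z" by (simp add: gi_of_def times_gi_def)
    ultimately show ?thesis
      using I unfolding is_ideal_def by (metis image_eqI)
  qed
  show "x \<in> re ` I" if "x \<in> \<sigma> ` re ` I" for x
    using that Is by (force simp: gi_map_def)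
qed

lemma simple_difference_ring_gi_map:
  fixes \<sigma> :: "'r::comm_ring_1 \<Rightarrow> 'r"
  assumes simple: "simple_difference_ring \<sigma>" and "ring_automorphism \<sigma>"
    and no_i: "\<not> (\<exists>x::'r. x * x + 1 = 0)"
  shows "simple_difference_ring (gi_map \<sigma>)"
  unfolding simple_difference_ring_def
proof (intro allI impI)
  fix I :: "'r gi set"
  assume DI: "difference_ideal (gi_map \<sigma>) I"
  then have I0: "0 \<in> I" and Imul: "\<And>r z. z \<in> I \<Longrightarrow> r * z \<in> I"
    by (auto simp: difference_ideal_def is_ideal_def)
  have "difference_ideal \<sigma> (gi_of -` I)"
    using gi_of.difference_ideal_vimage[OF DI] gi_map_gi_of ring_automorphism_zero assms(2)
    by metis
  then have real_part: "gi_of -` I = {0} \<or> gi_of -` I = UNIV"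
    using simple by (simp add: simple_difference_ring_def)
  have "re ` I = {0} \<or> re ` I = UNIV"
    using simple difference_ideal_re_image[OF DI] by (simp add: simple_difference_ring_def)
  then show "I = {0} \<or> I = UNIV"
  proof
    assume re0: "re ` I = {0}"
    have "z = 0" if "z \<in> I" for z
    proof -
      have "GI 0 1 * z \<in> I" using Imul that by blast
      moreover have "GI 0 1 * z = GI (- im z) (re z)"
        by (cases z) (simp add: gi_simps)
      ultimately have "- im z = 0" using re0 by (metis gi.sel(1) image_eqI singletonD)
      moreover have "re z = 0" using re0 that by blast
      ultimately show ?thesis by (simp add: gi.expand zero_gi_def)
    qed
    then show ?thesis using I0 by blast
  next
    assume "re ` I = UNIV"
    then obtain b where b: "GI 1 b \<in> I" by (metis UNIV_I gi.collapse imageE)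
    have "GI 1 (- b) * GI 1 b = gi_of (b * b + 1)"
      by (simp add: gi_simps gi_of_def)
    then have "b * b + 1 \<in> gi_of -` I" using Imul[OF b] by (metis vimageI2)
    moreover have "b * b + 1 \<noteq> 0" using no_i by blast
    ultimately have "1 \<in> I" using real_part by (metis UNIV_I gi_of.hom_one vimageE singletonD)
    then show ?thesis using Imul[of 1] by (metis UNIV_eq_I mult.right_neutral)
  qed
qed

lemma fundamental_matrix_gi:
  assumes "\<sigma> 0 = 0" and "\<iota> 0 = 0"
    and "A \<in> carrier_mat n n" and "U \<in> carrier_mat n n"
    and "map_mat \<sigma> U = map_mat \<iota> A * U"
  shows "map_mat (gi_map \<sigma>) (map_mat gi_of U)
    = map_mat (gi_map \<iota>) (map_mat gi_of A) * map_mat gi_of U"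
  using assms gi_of.mat_hom_mult[OF map_carrier_mat[THEN iffD2, OF assms(3)] assms(4)]
  by (simp add: map_mat_gi_map_gi_of)

lemma subring_gen_generators_gi:
  assumes \<iota>: "ring_embedding \<iota>" and U: "U \<in> carrier_mat n n"
    and gen: "subring_gen (range \<iota> \<union> {U $$ (i, j) | i j. i < n \<and> j < n} \<union> {d}) = UNIV"
  shows "subring_gen (range (gi_map \<iota>) \<union> {map_mat gi_of U $$ (i, j) | i j. i < n \<and> j < n}
    \<union> {gi_of d}) = UNIV"
    (is "subring_gen (?R \<union> ?E \<union> {gi_of d}) = UNIV")
proof (rule subring_gen_gi_eq_UNIV[OF gen])
  have "gi_map \<iota> (GI 0 1) = GI 0 1"
    using \<iota> ring_embedding_zero[OF \<iota>] by (simp add: gi_map_def ring_embedding_def)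
  then have "GI 0 1 \<in> ?R" using rangeI[of "gi_map \<iota>" "GI 0 1"] by simp
  then show "GI 0 1 \<in> ?R \<union> ?E \<union> {gi_of d}" by blast
  have "gi_of (\<iota> a) \<in> ?R" for a
    by (metis gi_map_gi_of[of \<iota>, OF ring_embedding_zero[OF \<iota>]] rangeI)
  moreover have "gi_of (U $$ (i, j)) \<in> ?E" if "i < n" "j < n" for i j
    using that U by (intro CollectI exI[of _ i] exI[of _ j]) simp
  ultimately show "gi_of ` (range \<iota> \<union> {U $$ (i, j) | i j. i < n \<and> j < n} \<union> {d})
      \<subseteq> ?R \<union> ?E \<union> {gi_of d}"
    by blast
qed

theorem lemma2p4:
  fixes \<phi> :: "'k::field_char_0 \<Rightarrow> 'k"
    and \<sigma> :: "'r::comm_ring_1 \<Rightarrow> 'r"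
    and \<iota> :: "'k \<Rightarrow> 'r"
    and A :: "'k mat" and n :: nat
  assumes "ring_automorphism \<phi>"
    and "is_real (UNIV :: 'k set)"
    and "real_closed {c. \<phi> c = c}"
    and "GL_mat n A"
    and "picard_vessiot \<phi> \<sigma> \<iota> n A"
    and "\<not> (\<exists>x::'r. x * x + 1 = 0)"
  shows "picard_vessiot (gi_map \<phi>) (gi_map \<sigma>) (gi_map \<iota>) n (map_mat gi_of A)"
proof -
  from assms(5) have ext: "difference_ring_ext \<phi> \<sigma> \<iota>" and A: "A \<in> carrier_mat n n"
    and simple: "simple_difference_ring \<sigma>"
    and "\<exists>U d. GL_mat n U \<and> map_mat \<sigma> U = map_mat \<iota> A * U \<and> d * det U = 1 \<and>
        subring_gen (range \<iota> \<union> {U $$ (i, j) | i j. i < n \<and> j < n} \<union> {d}) = UNIV"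
    unfolding picard_vessiot_def by auto
  then obtain U d where U: "GL_mat n U" and fundamental: "map_mat \<sigma> U = map_mat \<iota> A * U"
    and d: "d * det U = 1"
    and gen: "subring_gen (range \<iota> \<union> {U $$ (i, j) | i j. i < n \<and> j < n} \<union> {d}) = UNIV"
    by blast
  have \<sigma>: "ring_automorphism \<sigma>" and \<iota>: "ring_embedding \<iota>"
    using ext by (auto simp: difference_ring_ext_def)
  have Uc: "U \<in> carrier_mat n n" using U by (simp add: GL_mat_def)
  have "gi_of d * det (map_mat gi_of U) = 1"
    using d by (metis gi_of.hom_det gi_of.hom_mult gi_of.hom_one)
  with A Uc show ?thesis
    unfolding picard_vessiot_def
    by (intro conjI exI[of _ "map_mat gi_of U"] exI[of _ "gi_of d"] map_carrier_mat[THEN iffD2]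
        difference_ring_ext_gi_map[OF ext] gi_of.GL_mat_map_mat[OF U]
        fundamental_matrix_gi[OF ring_automorphism_zero[OF \<sigma>] ring_embedding_zero[OF \<iota>] A Uc
          fundamental]
        subring_gen_generators_gi[OF \<iota> Uc gen] simple_difference_ring_gi_map[OF simple \<sigma> assms(6)])
qed

end
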